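(* If $Q_1,\dots,Q_n\in\mathbb{E}^d$ are affinely independent, then they have ideal general position and general position with respect to every real, additive gain graph $\Phi$ on $n$ vertices.
   Context: A real, additive gain graph $\Phi$ on $V=\{1,\dots,n\}$: finite graph with edge set $E$ (multiple edges allowed, every edge with two distinct endpoints) and gains $\phi(e;i,j)\in\mathbb{R}$ with $\phi(e;j,i)=-\phi(e;i,j)$. $S\subseteq E$ is balanced if every circle in $S$ has gain sum $0$; $c(S)$ counts components of $(V,S)$, isolated vertices included. With $\psi_{ij}(P)=d(P,Q_i)^2-d(P,Q_j)^2$, $\mathcal{H}(\Phi;\mathbf{Q})$ consists of hyperplanes $h(e)=\{P:\psi_{ij}(P)=\phi(e;i,j)\}$ for edges $e$ with endpoints $i,j$. $\mathcal{L}(\mathcal{H})$: nonempty intersections of subsets of $\mathcal{H}$ (including $\mathbb{E}^d$) ordered by reverse inclusion; $E(s)=\{e:h(e)\supseteq s\}$. Ideal general position: the points are distinct and, with $\mathbb{E}^d\subset\mathbb{P}^d$, $h_\infty$ the ideal hyperplane and $p_{ij}$ the ideal point of line $Q_iQ_j$, for every set $T$ of unordered pairs the projective span of $\{p_{ij}:\{i,j\}\in T\}$ has dimension $\min(n-c(T),d)-1$, $c(T)$ the number of components of $(\{1,\dots,n\},T)$. Balanced flat: balanced $S\subseteq E$ such that every $e\notin S$ with both endpoints in one component of $(V,S)$ makes $S\cup\{e\}$ unbalanced; rank $n-c(S)$. General position w.r.t. $\Phi$: $s\mapsto E(s)$ is a poset isomorphism from $\mathcal{L}(\mathcal{H}(\Phi;\mathbf{Q}))$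 onto the poset (by inclusion) of balanced flats of rank $\le d$. *)

theory Defs
  imports "HOL-Analysis.Analysis"
begin

text \<open>Number of connected components of the graph on vertex set V with
  (symmetrised) adjacency adj; isolated vertices count as components.\<close>
definition comp_rel :: "'v set \<Rightarrow> ('v \<Rightarrow> 'v \<Rightarrow> bool) \<Rightarrow> ('v \<times> 'v) set" where
  "comp_rel V adj = {(u,v). u \<in> V \<and> v \<in> V \<and> (adj u v \<or> adj v u)}\<^sup>*"

definition num_comp :: "'v set \<Rightarrow> ('v \<Rightarrow> 'v \<Rightarrow> bool) \<Rightarrow> nat" where
  "num_comp V adj = card (V // comp_rel V adj)"

text \<open>A gain graph on V = {1..n}: a finite edge set E (of an arbitrary type 'e, so
  multiple edges are allowed), a map ends giving each edge with a chosen orientation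
  (i,j) (i \<noteq> j), and phi e = phi(e;i,j) for ends e = (i,j); then phi(e;j,i) = - phi e.\<close>
definition gain_graph :: "nat \<Rightarrow> 'e set \<Rightarrow> ('e \<Rightarrow> nat \<times> nat) \<Rightarrow> bool" where
  "gain_graph n E ends \<longleftrightarrow> finite E \<and>
     (\<forall>e\<in>E. fst (ends e) \<in> {1..n} \<and> snd (ends e) \<in> {1..n} \<and> fst (ends e) \<noteq> snd (ends e))"

definition dgain :: "('e \<Rightarrow> nat \<times> nat) \<Rightarrow> ('e \<Rightarrow> real) \<Rightarrow> 'e \<Rightarrow> nat \<Rightarrow> nat \<Rightarrow> real" where
  "dgain ends phi e i j = (if ends e = (i,j) then phi e else - phi e)"

definition edge_adj :: "('e \<Rightarrow> nat \<times> nat) \<Rightarrow> 'e set \<Rightarrow> nat \<Rightarrow> nat \<Rightarrow> bool" where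
  "edge_adj ends S u v \<longleftrightarrow> (\<exists>e\<in>S. ends e = (u,v) \<or> ends e = (v,u))"

definition is_circle :: "('e \<Rightarrow> nat \<times> nat) \<Rightarrow> 'e set \<Rightarrow> 'e list \<Rightarrow> nat list \<Rightarrow> bool" where
  "is_circle ends S es vs \<longleftrightarrow> length es = length vs \<and> length es \<ge> 2 \<and>
     distinct es \<and> distinct vs \<and> set es \<subseteq> S \<and>
     (\<forall>m<length es. ends (es!m) = (vs!m, vs!((m+1) mod length es))
                   \<or> ends (es!m) = (vs!((m+1) mod length es), vs!m))"

definition circle_gain :: "('e \<Rightarrow> nat \<times> nat) \<Rightarrow> ('e \<Rightarrow> real) \<Rightarrow> 'e list \<Rightarrow> nat list \<Rightarrow> real" where
  "circle_gain ends phi es vs =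
     (\<Sum>m<length es. dgain ends phi (es!m) (vs!m) (vs!((m+1) mod length es)))"

definition balanced :: "('e \<Rightarrow> nat \<times> nat) \<Rightarrow> ('e \<Rightarrow> real) \<Rightarrow> 'e set \<Rightarrow> bool" where
  "balanced ends phi S \<longleftrightarrow>
     (\<forall>es vs. is_circle ends S es vs \<longrightarrow> circle_gain ends phi es vs = 0)"

definition balanced_flat :: "nat \<Rightarrow> 'e set \<Rightarrow> ('e \<Rightarrow> nat \<times> nat) \<Rightarrow> ('e \<Rightarrow> real) \<Rightarrow> 'e set \<Rightarrow> bool" where
  "balanced_flat n E ends phi S \<longleftrightarrow> S \<subseteq> E \<and> balanced ends phi S \<and>
     (\<forall>e\<in>E - S. (fst (ends e), snd (ends e)) \<in> comp_rel {1..n} (edge_adj ends S)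
                 \<longrightarrow> \<not> balanced ends phi (insert e S))"

definition flat_rank :: "nat \<Rightarrow> ('e \<Rightarrow> nat \<times> nat) \<Rightarrow> 'e set \<Rightarrow> nat" where
  "flat_rank n ends S = n - num_comp {1..n} (edge_adj ends S)"

definition gain_hyp :: "(nat \<Rightarrow> 'a::euclidean_space) \<Rightarrow> ('e \<Rightarrow> nat \<times> nat) \<Rightarrow> ('e \<Rightarrow> real) \<Rightarrow> 'e \<Rightarrow> 'a set" where
  "gain_hyp Q ends phi e =
     {P. (dist P (Q (fst (ends e))))\<^sup>2 - (dist P (Q (snd (ends e))))\<^sup>2 = phi e}"

text \<open>Intersection lattice L(H): nonempty intersections of subsets of H (empty subset gives the whole space).\<close>
definition int_lattice :: "(nat \<Rightarrow> 'a::euclidean_space) \<Rightarrow> 'e set \<Rightarrow> ('e \<Rightarrow> nat \<times> nat) \<Rightarrow> ('e \<Rightarrow> real) \<Rightarrow> 'a set set" where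
  "int_lattice Q E ends phi = {s. \<exists>A\<subseteq>E. s = (\<Inter>e\<in>A. gain_hyp Q ends phi e) \<and> s \<noteq> {}}"

definition edges_of :: "(nat \<Rightarrow> 'a::euclidean_space) \<Rightarrow> 'e set \<Rightarrow> ('e \<Rightarrow> nat \<times> nat) \<Rightarrow> ('e \<Rightarrow> real) \<Rightarrow> 'a set \<Rightarrow> 'e set" where
  "edges_of Q E ends phi s = {e\<in>E. s \<subseteq> gain_hyp Q ends phi e}"

text \<open>General position w.r.t. Phi: s \<mapsto> E(s) is a poset isomorphism from L(H) (reverse inclusion)
  onto the balanced flats of rank \<le> d (inclusion).\<close>
definition general_position_wrt :: "nat \<Rightarrow> (nat \<Rightarrow> 'a::euclidean_space) \<Rightarrow> 'e set \<Rightarrow> ('e \<Rightarrow> nat \<times> nat) \<Rightarrow> ('e \<Rightarrow> real) \<Rightarrow> bool" where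
  "general_position_wrt n Q E ends phi \<longleftrightarrow>
     bij_betw (edges_of Q E ends phi) (int_lattice Q E ends phi)
       {S. balanced_flat n E ends phi S \<and> flat_rank n ends S \<le> DIM('a)} \<and>
     (\<forall>s\<in>int_lattice Q E ends phi. \<forall>t\<in>int_lattice Q E ends phi.
        t \<subseteq> s \<longleftrightarrow> edges_of Q E ends phi s \<subseteq> edges_of Q E ends phi t)"

text \<open>The ideal point p_ij of line Q_iQ_j is the direction Q_i - Q_j; the projective span of a
  set of ideal points has projective dimension dim(linear span of the directions) - 1.
  So the condition dim = min(n - c(T), d) - 1 becomes dim (directions) = min(n - c(T), d).\<close>
definition unordered_pairs :: "nat \<Rightarrow> nat set set" where
  "unordered_pairs n = {{i,j} | i j. i \<in> {1..n} \<and> j \<in> {1..n} \<and> i \<noteq> j}"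

definition ideal_general_position :: "nat \<Rightarrow> (nat \<Rightarrow> 'a::euclidean_space) \<Rightarrow> bool" where
  "ideal_general_position n Q \<longleftrightarrow> inj_on Q {1..n} \<and>
     (\<forall>T\<subseteq>unordered_pairs n.
        dim {Q i - Q j | i j. {i,j} \<in> T} = min (n - num_comp {1..n} (\<lambda>u v. {u,v} \<in> T)) DIM('a))"

end

theory Submission
  imports Defs
begin

text \<open>An edge set S is balanced exactly when it has a potential x, i.e. x i - x j = phi e on
  every edge e from i to j; and for a point P the squared distances i \<mapsto> d(P, Q i)^2 form a
  potential of S exactly when P lies on all hyperplanes of S. Affine independence of the Q i
  means that the differences d(P, Q i)^2 - d(P, Q j)^2 can be prescribed arbitrarily. Hence every
  balanced flat is realised by a nonempty intersection, and shifting its potential by a constant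
  on one component shows that no further hyperplane contains that intersection. The same
  freedom, applied to a functional separating two components of T, shows that the directions
  Q i - Q j for {i,j} \<in> T span a space of dimension n - c(T); since n \<le> d + 1 this rank never
  exceeds d.\<close>

definition potential :: "('e \<Rightarrow> nat \<times> nat) \<Rightarrow> ('e \<Rightarrow> real) \<Rightarrow> 'e set \<Rightarrow> (nat \<Rightarrow> real) \<Rightarrow> bool" where
  "potential ends phi S x \<longleftrightarrow> (\<forall>e\<in>S. x (fst (ends e)) - x (snd (ends e)) = phi e)"

lemma potential_subset: "potential ends phi T x \<Longrightarrow> S \<subseteq> T \<Longrightarrow> potential ends phi S x"
  unfolding potential_def by auto

lemma dgain_potential:
  assumes "potential ends phi S x" "e \<in> S" "ends e = (a,b) \<or> ends e = (b,a)"
  shows "dgain ends phi e a b = x a - x b"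
  using assms unfolding potential_def dgain_def by (cases "ends e = (a,b)") force+

lemma sum_cyclic_differences:
  fixes f :: "nat \<Rightarrow> 'a::ab_group_add"
  assumes "k > 0"
  shows "(\<Sum>m<k. f m - f ((m+1) mod k)) = 0"
proof -
  obtain k' where k: "k = Suc k'" using assms by (cases k) auto
  have "(\<Sum>m<k. f ((m+1) mod k)) = (\<Sum>m<k'. f ((m+1) mod k)) + f ((k'+1) mod k)"
    by (simp add: k)
  also have "(\<Sum>m<k'. f ((m+1) mod k)) = (\<Sum>m<k'. f (Suc m))"
    by (rule sum.cong) (auto simp: k)
  also have "f ((k'+1) mod k) = f 0" by (simp add: k)
  also have "(\<Sum>m<k'. f (Suc m)) + f 0 = (\<Sum>m<k. f m)"
    unfolding k sum.lessThan_Suc_shift by (simp add: add.commute)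
  finally show ?thesis by (simp add: sum_subtractf)
qed

lemma potential_imp_balanced:
  assumes "potential ends phi S x"
  shows "balanced ends phi S"
  unfolding balanced_def
proof (intro allI impI)
  fix es vs assume c: "is_circle ends S es vs"
  let ?k = "length es"
  have "circle_gain ends phi es vs = (\<Sum>m<?k. x (vs!m) - x (vs!((m+1) mod ?k)))"
    unfolding circle_gain_def
  proof (rule sum.cong)
    fix m assume "m \<in> {..<?k}"
    then have "es!m \<in> S" "ends (es!m) = (vs!m, vs!((m+1) mod ?k)) \<or> ends (es!m) = (vs!((m+1) mod ?k), vs!m)"
      using c unfolding is_circle_def by auto
    then show "dgain ends phi (es!m) (vs!m) (vs!((m+1) mod ?k)) = x (vs!m) - x (vs!((m+1) mod ?k))"
      by (rule dgain_potential[OF assms])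
  qed simp
  also have "\<dots> = 0"
    using c unfolding is_circle_def by (intro sum_cyclic_differences) auto
  finally show "circle_gain ends phi es vs = 0" .
qed

lemma balanced_subset: "balanced ends phi T \<Longrightarrow> S \<subseteq> T \<Longrightarrow> balanced ends phi S"
  unfolding balanced_def is_circle_def by (meson order_trans)

lemma gain_graph_subset: "gain_graph n E ends \<Longrightarrow> S \<subseteq> E \<Longrightarrow> gain_graph n S ends"
  unfolding gain_graph_def by (auto intro: finite_subset)

lemma equiv_comp_rel: "equiv UNIV (comp_rel V adj)"
  unfolding comp_rel_def equiv_def
  by (intro conjI refl_rtrancl trans_rtrancl sym_rtrancl) (auto simp: sym_def)

lemma comp_rel_sym: "(u,v) \<in> comp_rel V adj \<Longrightarrow> (v,u) \<in> comp_rel V adj"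
  using equiv_comp_rel[of V adj] unfolding equiv_def by (meson symD)

lemma edge_in_comp_rel:
  assumes "e \<in> S" "ends e = (a,b)" "a \<in> V" "b \<in> V"
  shows "(a, b) \<in> comp_rel V (edge_adj ends S)"
  using assms unfolding comp_rel_def edge_adj_def by (intro r_into_rtrancl) auto

definition graph_path :: "('e \<Rightarrow> nat \<times> nat) \<Rightarrow> 'e set \<Rightarrow> 'e list \<Rightarrow> nat list \<Rightarrow> bool" where
  "graph_path ends S es vs \<longleftrightarrow> length vs = Suc (length es) \<and> distinct vs \<and> set es \<subseteq> S \<and>
     (\<forall>m<length es. ends (es!m) = (vs!m, vs!(Suc m)) \<or> ends (es!m) = (vs!(Suc m), vs!m))"

lemma comp_rel_imp_graph_path:
  assumes "(u,v) \<in> comp_rel V (edge_adj ends S)"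
  shows "\<exists>es vs. graph_path ends S es vs \<and> vs!0 = u \<and> vs!(length es) = v"
  using assms unfolding comp_rel_def
proof (induction rule: rtrancl_induct)
  case base
  show ?case by (rule exI[of _ "[]"], rule exI[of _ "[u]"]) (simp add: graph_path_def)
next
  case (step w z)
  then obtain es vs where p: "graph_path ends S es vs" "vs!0 = u" "vs!(length es) = w" by blast
  then have len: "length vs = Suc (length es)" unfolding graph_path_def by simp
  from step(2) obtain e where e: "e \<in> S" "ends e = (w,z) \<or> ends e = (z,w)"
    unfolding edge_adj_def by auto
  show ?case
  proof (cases "z \<in> set vs")
    case True
    \<comment> \<open>cut the path back to its earlier visit of z, keeping the vertices distinct\<close>
    then obtain k where k: "k \<le> length es" "vs!k = z" using len by (metis in_set_conv_nth less_Suc_eq_le)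
    then have "graph_path ends S (take k es) (take (Suc k) vs)"
      using p(1) len unfolding graph_path_def by (auto simp: min_def dest: in_set_takeD)
    moreover have "(take (Suc k) vs)!(length (take k es)) = z" using k len by (auto simp: min_def)
    ultimately show ?thesis using p(2) by fastforce
  next
    case False
    have "graph_path ends S (es@[e]) (vs@[z])"
      using p(1) len e p(3) False unfolding graph_path_def
      by (auto simp: nth_append less_Suc_eq)
    moreover have "(vs@[z])!0 = u" using p(2) len by (simp add: nth_append)
    ultimately show ?thesis using len by (intro exI) (auto simp: nth_append)
  qed
qed

lemma graph_path_distinct_edges:
  assumes "graph_path ends S es vs"
  shows "distinct es"
  unfolding distinct_conv_nth
proof (intro allI impI)
  fix a b assume ab: "a < length es" "b < length es" "a \<noteq> b"
  have len: "length vs = Suc (length es)" and dv: "distinct vs"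
    and ed: "\<forall>m<length es. ends (es!m) = (vs!m, vs!(Suc m)) \<or> ends (es!m) = (vs!(Suc m), vs!m)"
    using assms unfolding graph_path_def by auto
  show "es!a \<noteq> es!b"
  proof
    assume "es!a = es!b"
    then have "vs!a = vs!b \<or> vs!a = vs!(Suc b)" "vs!(Suc a) = vs!b \<or> vs!(Suc a) = vs!(Suc b)"
      using ed ab by (metis Pair_inject)+
    then show False using dv ab len by (simp add: nth_eq_iff_index_eq)
  qed
qed

lemma potential_sum_graph_path:
  assumes "graph_path ends S es vs" "potential ends phi S x"
  shows "(\<Sum>m<length es. dgain ends phi (es!m) (vs!m) (vs!(Suc m))) = x (vs!0) - x (vs!(length es))"
proof -
  have "(\<Sum>m<length es. dgain ends phi (es!m) (vs!m) (vs!(Suc m)))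
      = (\<Sum>m<length es. x (vs!m) - x (vs!(Suc m)))"
  proof (rule sum.cong)
    fix m assume "m \<in> {..<length es}"
    then have "es!m \<in> S" "ends (es!m) = (vs!m, vs!(Suc m)) \<or> ends (es!m) = (vs!(Suc m), vs!m)"
      using assms(1) unfolding graph_path_def by auto
    then show "dgain ends phi (es!m) (vs!m) (vs!(Suc m)) = x (vs!m) - x (vs!(Suc m))"
      by (rule dgain_potential[OF assms(2)])
  qed simp
  also have "\<dots> = x (vs!0) - x (vs!(length es))" by (rule sum_lessThan_telescope')
  finally show ?thesis .
qed

lemma closing_edge_gain_eq_potential_diff:
  assumes p: "graph_path ends S es vs" and v0: "vs!0 = j" and vk: "vs!(length es) = i"
    and ij: "i \<noteq> j" and eS: "e \<notin> S" and ee: "ends e = (i,j)"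
    and x: "potential ends phi S x" and bal: "balanced ends phi (insert e S)"
  shows "phi e = x i - x j"
proof -
  let ?k = "length es"
  have "?k \<noteq> 0" using v0 vk ij by auto
  moreover have "Suc m mod Suc ?k = Suc m" if "m < ?k" for m using that by simp
  ultimately have "is_circle ends (insert e S) (es@[e]) vs"
    using p graph_path_distinct_edges[OF p] eS ee v0 vk unfolding is_circle_def graph_path_def
    by (auto simp: nth_append less_Suc_eq Suc_le_eq)
  then have "0 = circle_gain ends phi (es@[e]) vs" using bal unfolding balanced_def by auto
  also have "\<dots> = (\<Sum>m<?k. dgain ends phi (es!m) (vs!m) (vs!(Suc m))) + dgain ends phi e i j"
    unfolding circle_gain_def using v0 vk by (simp add: nth_append)
  also have "\<dots> = x j - x i + phi e" using potential_sum_graph_path[OF p x] v0 vk ee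
    by (simp add: dgain_def)
  finally show ?thesis by simp
qed

lemma potential_shift_component:
  assumes x: "potential ends phi S x" and V: "\<forall>e\<in>S. fst (ends e) \<in> V \<and> snd (ends e) \<in> V"
  shows "potential ends phi S (\<lambda>v. x v + (if v \<in> comp_rel V (edge_adj ends S) `` {i} then c else 0))"
  unfolding potential_def
proof
  fix e assume e: "e \<in> S"
  obtain a b where ab: "ends e = (a,b)" by fastforce
  let ?R = "comp_rel V (edge_adj ends S)"
  have "(a, b) \<in> ?R" using edge_in_comp_rel[of e S ends a b V] V e ab by force
  then have "a \<in> ?R `` {i} \<longleftrightarrow> b \<in> ?R `` {i}"
    by (meson equiv_comp_rel equivE symD transD Image_singleton_iff)
  moreover have "x a - x b = phi e" using x e ab unfolding potential_def by force
  ultimately show "x (fst (ends e)) + (if fst (ends e) \<in> ?R `` {i} then c else 0) -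
      (x (snd (ends e)) + (if snd (ends e) \<in> ?R `` {i} then c else 0)) = phi e"
    unfolding ab by auto
qed

lemma balanced_imp_potential:
  assumes "gain_graph n S ends" "balanced ends phi S"
  shows "\<exists>x. potential ends phi S x"
proof -
  have "finite S" using assms(1) unfolding gain_graph_def by simp
  from this assms show ?thesis
  proof (induction S rule: finite_induct)
    case empty
    then show ?case by (auto simp: potential_def)
  next
    case (insert e F)
    let ?R = "comp_rel {1..n} (edge_adj ends F)"
    have g: "gain_graph n F ends" using insert.prems gain_graph_subset by blast
    obtain x where x: "potential ends phi F x"
      using insert g balanced_subset[of ends phi "insert e F" F] by auto
    obtain i j where ee: "ends e = (i,j)" by fastforce
    have ij: "i \<noteq> j" "i \<in> {1..n}" "j \<in> {1..n}" using insert.prems ee unfolding gain_graph_def by auto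
    show ?case
    proof (cases "(j,i) \<in> ?R")
      case True
      \<comment> \<open>e closes a circle, whose balance forces the gain of e\<close>
      then obtain es vs where p: "graph_path ends F es vs" "vs!0 = j" "vs!(length es) = i"
        using comp_rel_imp_graph_path by blast
      have "phi e = x i - x j"
        using closing_edge_gain_eq_potential_diff[OF p ij(1) insert.hyps(2) ee x] insert.prems by simp
      then have "potential ends phi (insert e F) x" using x ee unfolding potential_def by auto
      then show ?thesis by blast
    next
      case False
      \<comment> \<open>e joins two components: shift the potential on the component of i\<close>
      define x' where "x' = (\<lambda>v. x v + (if v \<in> ?R `` {i} then phi e - (x i - x j) else 0))"
      have "potential ends phi F x'"
        unfolding x'_def using g by (intro potential_shift_component[OF x]) (auto simp: gain_graph_def)
      moreover have "i \<in> ?R `` {i}" by (simp add: comp_rel_def)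
      moreover have "j \<notin> ?R `` {i}" using False comp_rel_sym[of i j] by auto
      ultimately have "potential ends phi (insert e F) x'" using ee unfolding potential_def x'_def by auto
      then show ?thesis by blast
    qed
  qed
qed

lemma potential_diff_eq_on_comp_rel:
  assumes x: "potential ends phi S x" and y: "potential ends phi S y"
    and uv: "(u,v) \<in> comp_rel V (edge_adj ends S)"
  shows "x u - x v = y u - y v"
  using uv unfolding comp_rel_def
proof (induction rule: rtrancl_induct)
  case base
  then show ?case by simp
next
  case (step w z)
  then obtain e where "e \<in> S" "ends e = (w,z) \<or> ends e = (z,w)"
    unfolding edge_adj_def by auto
  then have "x w - x z = y w - y z"
    using dgain_potential[OF x] dgain_potential[OF y] by metis
  then show ?case using step.IH by simp
qed

lemma independent_inner_interpolation:
  fixes B :: "'a::euclidean_space set"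
  assumes "independent B"
  shows "\<exists>P. \<forall>w\<in>B. P \<bullet> w = b w"
proof -
  obtain g where "linear g" "\<forall>w\<in>B. g w = b w"
    using linear_independent_extend[OF assms] by blast
  then show ?thesis by (intro exI[of _ "adjoint g 1"]) (simp add: adjoint_clauses)
qed

lemma affine_independent_inner_interpolation:
  fixes Q :: "'v \<Rightarrow> 'a::euclidean_space"
  assumes inj: "inj_on Q V" and ai: "\<not> affine_dependent (Q ` V)" and a: "a \<in> V"
  shows "\<exists>P. \<forall>i\<in>V. P \<bullet> (Q i - Q a) = y i - y a"
proof -
  define B where "B = (\<lambda>q. - Q a + q) ` (Q ` V - {Q a})"
  have "independent B"
    using ai affine_dependent_iff_dependent2[of "Q a" "Q ` V"] a unfolding B_def by auto
  then obtain P where P: "\<forall>w\<in>B. P \<bullet> w = y (inv_into V Q (w + Q a)) - y a"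
    using independent_inner_interpolation[of B "\<lambda>w. y (inv_into V Q (w + Q a)) - y a"] by blast
  have "P \<bullet> (Q i - Q a) = y i - y a" if i: "i \<in> V" for i
  proof (cases "i = a")
    case False
    then have "- Q a + Q i \<in> B" unfolding B_def using inj i a by (auto dest: inj_onD)
    then show ?thesis using P inv_into_f_f[OF inj i] by (force simp: algebra_simps)
  qed simp
  then show ?thesis by blast
qed

lemma affine_independent_sqdist_interpolation:
  fixes Q :: "'v \<Rightarrow> 'a::euclidean_space"
  assumes inj: "inj_on Q V" and ai: "\<not> affine_dependent (Q ` V)"
  shows "\<exists>P. \<forall>i\<in>V. \<forall>j\<in>V. (dist P (Q i))\<^sup>2 - (dist P (Q j))\<^sup>2 = y i - y j"
proof (cases "V = {}")
  case False
  then obtain a where a: "a \<in> V" by blast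
  obtain P where P: "\<forall>i\<in>V. P \<bullet> (Q i - Q a) = (Q i \<bullet> Q i - y i)/2 - (Q a \<bullet> Q a - y a)/2"
    using affine_independent_inner_interpolation[OF inj ai a, of "\<lambda>i. (Q i \<bullet> Q i - y i)/2"] by blast
  have sqdist: "(dist P q)\<^sup>2 = P \<bullet> P - 2 * (P \<bullet> q) + q \<bullet> q" for q
    by (simp add: dist_norm power2_norm_eq_inner inner_diff_left inner_diff_right inner_commute)
  have const: "(dist P (Q i))\<^sup>2 - y i = (dist P (Q a))\<^sup>2 - y a" if "i \<in> V" for i
  proof -
    have "P \<bullet> (Q i - Q a) = (Q i \<bullet> Q i - y i)/2 - (Q a \<bullet> Q a - y a)/2" using P that by blast
    then show ?thesis unfolding sqdist inner_diff_right by (simp add: field_simps)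
  qed
  have "(dist P (Q i))\<^sup>2 - (dist P (Q j))\<^sup>2 = y i - y j" if "i \<in> V" "j \<in> V" for i j
    using const[OF that(1)] const[OF that(2)] by linarith
  then show ?thesis by blast
qed simp

lemma card_le_DIM_Suc_if_affine_independent:
  fixes S :: "'a::euclidean_space set"
  assumes "\<not> affine_dependent S"
  shows "card S \<le> DIM('a) + 1"
  using affine_dependent_biggerset[of S] aff_independent_finite[OF assms] assms by linarith

lemma num_comp_pos: "finite V \<Longrightarrow> V \<noteq> {} \<Longrightarrow> 0 < num_comp V adj"
  unfolding num_comp_def quotient_def by (auto simp: card_gt_0_iff)

lemma rank_le_DIM_if_affine_independent:
  fixes Q :: "nat \<Rightarrow> 'a::euclidean_space"
  assumes "inj_on Q {1..n}" and "\<not> affine_dependent (Q ` {1..n})"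
  shows "n - num_comp {1..n} adj \<le> DIM('a)"
proof -
  have "n \<le> DIM('a) + 1"
    using card_le_DIM_Suc_if_affine_independent[OF assms(2)] card_image[OF assms(1)] by simp
  then show ?thesis using num_comp_pos[of "{1..n}" adj] by (cases "n = 0") auto
qed

lemma mem_Inter_gain_hyp_iff:
  "P \<in> (\<Inter>e\<in>A. gain_hyp Q ends phi e) \<longleftrightarrow> potential ends phi A (\<lambda>i. (dist P (Q i))\<^sup>2)"
  unfolding gain_hyp_def potential_def by auto

lemma int_lattice_eq_Inter_edges_of:
  assumes "s \<in> int_lattice Q E ends phi"
  shows "s = (\<Inter>e\<in>edges_of Q E ends phi s. gain_hyp Q ends phi e)"
proof -
  obtain A where A: "A \<subseteq> E" "s = (\<Inter>e\<in>A. gain_hyp Q ends phi e)"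
    using assms unfolding int_lattice_def by blast
  then have "A \<subseteq> edges_of Q E ends phi s" unfolding edges_of_def by auto
  then show ?thesis using A(2) unfolding edges_of_def by auto
qed

lemma affine_independent_realizes_potential:
  fixes Q :: "nat \<Rightarrow> 'a::euclidean_space"
  assumes "inj_on Q {1..n}" and "\<not> affine_dependent (Q ` {1..n})"
    and g: "gain_graph n S ends" and y: "potential ends phi S y"
  shows "\<exists>P. P \<in> (\<Inter>e\<in>S. gain_hyp Q ends phi e) \<and>
             (\<forall>i\<in>{1..n}. \<forall>j\<in>{1..n}. (dist P (Q i))\<^sup>2 - (dist P (Q j))\<^sup>2 = y i - y j)"
proof -
  obtain P where P: "\<forall>i\<in>{1..n}. \<forall>j\<in>{1..n}. (dist P (Q i))\<^sup>2 - (dist P (Q j))\<^sup>2 = y i - y j"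
    using affine_independent_sqdist_interpolation[OF assms(1,2), where y = y] by blast
  have "potential ends phi S (\<lambda>i. (dist P (Q i))\<^sup>2)"
    unfolding potential_def
  proof
    fix e assume e: "e \<in> S"
    then have "fst (ends e) \<in> {1..n}" "snd (ends e) \<in> {1..n}" using g unfolding gain_graph_def by auto
    then have "(dist P (Q (fst (ends e))))\<^sup>2 - (dist P (Q (snd (ends e))))\<^sup>2
        = y (fst (ends e)) - y (snd (ends e))" using P by blast
    also have "\<dots> = phi e" using y e unfolding potential_def by blast
    finally show "(dist P (Q (fst (ends e))))\<^sup>2 - (dist P (Q (snd (ends e))))\<^sup>2 = phi e" .
  qed
  then have "P \<in> (\<Inter>e\<in>S. gain_hyp Q ends phi e)" by (simp only: mem_Inter_gain_hyp_iff)
  then show ?thesis using P by blast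
qed

lemma edges_of_balanced_flat:
  fixes Q :: "nat \<Rightarrow> 'a::euclidean_space"
  assumes g: "gain_graph n E ends" and s: "s \<in> int_lattice Q E ends phi"
  shows "balanced_flat n E ends phi (edges_of Q E ends phi s)"
proof -
  let ?S = "edges_of Q E ends phi s"
  have SE: "?S \<subseteq> E" unfolding edges_of_def by auto
  have sqdist: "potential ends phi ?S (\<lambda>i. (dist P (Q i))\<^sup>2)" if "P \<in> s" for P
    using that unfolding potential_def edges_of_def gain_hyp_def by auto
  obtain P0 where "P0 \<in> s" using s unfolding int_lattice_def by blast
  then have "balanced ends phi ?S" using potential_imp_balanced sqdist by blast
  moreover have "\<not> balanced ends phi (insert e ?S)"
    if e: "e \<in> E - ?S" and c: "(fst (ends e), snd (ends e)) \<in> comp_rel {1..n} (edge_adj ends ?S)" for e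
  proof
    assume "balanced ends phi (insert e ?S)"
    then obtain y where y: "potential ends phi (insert e ?S) y"
      using balanced_imp_potential gain_graph_subset[OF g] e SE by (metis Diff_iff insert_subset)
    \<comment> \<open>on the component of e, y differs by a constant from the squared distances of any P \<in> s\<close>
    have "s \<subseteq> gain_hyp Q ends phi e"
    proof
      fix P assume "P \<in> s"
      then have "(dist P (Q (fst (ends e))))\<^sup>2 - (dist P (Q (snd (ends e))))\<^sup>2
            = y (fst (ends e)) - y (snd (ends e))"
        using potential_diff_eq_on_comp_rel[OF sqdist potential_subset[OF y] c] by auto
      also have "\<dots> = phi e" using y unfolding potential_def by auto
      finally show "P \<in> gain_hyp Q ends phi e" unfolding gain_hyp_def by simp
    qed
    then show False using e unfolding edges_of_def by auto
  qed
  ultimately show ?thesis unfolding balanced_flat_def using SE by blast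
qed

lemma Inter_gain_hyp_not_subset:
  fixes Q :: "nat \<Rightarrow> 'a::euclidean_space"
  assumes inj: "inj_on Q {1..n}" and ai: "\<not> affine_dependent (Q ` {1..n})"
    and g: "gain_graph n E ends" and S: "balanced_flat n E ends phi S" and e: "e \<in> E - S"
  shows "\<not> (\<Inter>e\<in>S. gain_hyp Q ends phi e) \<subseteq> gain_hyp Q ends phi e"
proof
  let ?s = "\<Inter>e\<in>S. gain_hyp Q ends phi e" and ?R = "comp_rel {1..n} (edge_adj ends S)"
  assume sub: "?s \<subseteq> gain_hyp Q ends phi e"
  obtain i j where ee: "ends e = (i,j)" by fastforce
  have gS: "gain_graph n S ends" using g S gain_graph_subset unfolding balanced_flat_def by blast
  obtain y where y: "potential ends phi S y"
    using balanced_imp_potential[OF gS] S unfolding balanced_flat_def by blast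
  have he: "(dist P (Q i))\<^sup>2 - (dist P (Q j))\<^sup>2 = phi e" if "P \<in> ?s" for P
    using sub that ee unfolding gain_hyp_def by auto
  obtain P where P: "P \<in> ?s" "\<forall>i\<in>{1..n}. \<forall>j\<in>{1..n}. (dist P (Q i))\<^sup>2 - (dist P (Q j))\<^sup>2 = y i - y j"
    using affine_independent_realizes_potential[OF inj ai gS y] by blast
  show False
  proof (cases "(i,j) \<in> ?R")
    case True
    \<comment> \<open>then P's squared distances make insert e S balanced, against closedness of the flat\<close>
    have "potential ends phi (insert e S) (\<lambda>i. (dist P (Q i))\<^sup>2)"
      using P(1) he[OF P(1)] ee unfolding mem_Inter_gain_hyp_iff potential_def by auto
    then have "balanced ends phi (insert e S)" by (rule potential_imp_balanced)
    then show False using S e True ee unfolding balanced_flat_def by auto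
  next
    case False
    \<comment> \<open>then shifting y on the component of i yields a second point of ?s with another gain on e\<close>
    let ?y' = "\<lambda>v. y v + (if v \<in> ?R `` {i} then 1 else 0)"
    have "potential ends phi S ?y'"
      using potential_shift_component[OF y] gS unfolding gain_graph_def by blast
    then obtain P' where P': "P' \<in> ?s" "\<forall>i\<in>{1..n}. \<forall>j\<in>{1..n}. (dist P' (Q i))\<^sup>2 - (dist P' (Q j))\<^sup>2 = ?y' i - ?y' j"
      using affine_independent_realizes_potential[OF inj ai gS] by blast
    have ij: "i \<in> {1..n}" "j \<in> {1..n}" using g e ee unfolding gain_graph_def by force+
    have "?y' i - ?y' j = y i - y j + 1" using False by (auto simp: comp_rel_def)
    then show False using P(2) P'(2) he[OF P(1)] he[OF P'(1)] ij by auto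
  qed
qed

lemma balanced_flat_eq_edges_of_Inter:
  fixes Q :: "nat \<Rightarrow> 'a::euclidean_space"
  assumes inj: "inj_on Q {1..n}" and ai: "\<not> affine_dependent (Q ` {1..n})"
    and g: "gain_graph n E ends" and S: "balanced_flat n E ends phi S"
  shows "(\<Inter>e\<in>S. gain_hyp Q ends phi e) \<in> int_lattice Q E ends phi"
    and "edges_of Q E ends phi (\<Inter>e\<in>S. gain_hyp Q ends phi e) = S"
proof -
  have SE: "S \<subseteq> E" using S unfolding balanced_flat_def by blast
  then have gS: "gain_graph n S ends" using g gain_graph_subset by blast
  obtain y where "potential ends phi S y"
    using balanced_imp_potential[OF gS] S unfolding balanced_flat_def by blast
  then obtain P where "P \<in> (\<Inter>e\<in>S. gain_hyp Q ends phi e)"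
    using affine_independent_realizes_potential[OF inj ai gS] by blast
  then show "(\<Inter>e\<in>S. gain_hyp Q ends phi e) \<in> int_lattice Q E ends phi"
    unfolding int_lattice_def using SE by (intro CollectI exI[of _ S]) auto
  show "edges_of Q E ends phi (\<Inter>e\<in>S. gain_hyp Q ends phi e) = S"
  proof
    show "edges_of Q E ends phi (\<Inter>e\<in>S. gain_hyp Q ends phi e) \<subseteq> S"
      using Inter_gain_hyp_not_subset[OF inj ai g S] unfolding edges_of_def by blast
    show "S \<subseteq> edges_of Q E ends phi (\<Inter>e\<in>S. gain_hyp Q ends phi e)"
      unfolding edges_of_def using SE by auto
  qed
qed

lemma equiv_rtrancl_sym: "sym B \<Longrightarrow> equiv UNIV (B\<^sup>*)"
  unfolding equiv_def by (intro conjI refl_rtrancl sym_rtrancl trans_rtrancl) auto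

lemma rtrancl_class_eq_sym:
  "sym B \<Longrightarrow> x \<in> B\<^sup>* `` {y} \<Longrightarrow> B\<^sup>* `` {x} = B\<^sup>* `` {y}"
  using equiv_class_eq[OF equiv_rtrancl_sym] equiv_rtrancl_sym unfolding equiv_def
  by (metis Image_singleton_iff symD)

lemma quotient_rtrancl_merge:
  fixes B :: "('a \<times> 'a) set" and i j :: 'a
  assumes "sym B" "i \<in> V"
  defines "Ci \<equiv> B\<^sup>* `` {i}" and "Cj \<equiv> B\<^sup>* `` {j}"
  shows "V // (insert (i,j) (insert (j,i) B))\<^sup>* = insert (Ci \<union> Cj) (V // B\<^sup>* - {Ci, Cj})"
proof -
  let ?R = "B\<^sup>*" and ?R' = "(insert (i,j) (insert (j,i) B))\<^sup>*"
  have sy: "(x,y) \<in> ?R \<Longrightarrow> (y,x) \<in> ?R" for x y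
    using equiv_rtrancl_sym[OF assms(1)] unfolding equiv_def by (meson symD)
  have "?R' = ?R \<union> (Ci \<union> Cj) \<times> (Ci \<union> Cj)"
    unfolding rtrancl_insert Ci_def Cj_def using sy by (auto intro: rtrancl_trans)
  then have cl': "?R' `` {x} = (if x \<in> Ci \<union> Cj then Ci \<union> Cj else ?R `` {x})" for x
    unfolding Ci_def Cj_def using sy by (auto intro: rtrancl_trans)
  have other: "x \<notin> Ci \<union> Cj \<Longrightarrow> ?R `` {x} \<noteq> Ci \<and> ?R `` {x} \<noteq> Cj" for x
    by auto
  show ?thesis
  proof
    show "V // ?R' \<subseteq> insert (Ci \<union> Cj) (V // ?R - {Ci, Cj})"
    proof
      fix C assume "C \<in> V // ?R'"
      then obtain x where "C = ?R' `` {x}" "x \<in> V" by (rule quotientE)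
      then show "C \<in> insert (Ci \<union> Cj) (V // ?R - {Ci, Cj})"
        using other[of x] cl' by (auto intro: quotientI)
    qed
    have "C \<in> V // ?R'" if C: "C \<in> V // ?R - {Ci, Cj}" for C
    proof -
      obtain x where x: "C = ?R `` {x}" "x \<in> V" using C by (blast elim: quotientE)
      then have "x \<notin> Ci \<union> Cj" using C rtrancl_class_eq_sym[OF assms(1)] unfolding Ci_def Cj_def by blast
      then show ?thesis using x cl' by (metis quotientI)
    qed
    moreover have "Ci \<union> Cj = ?R' `` {i}" using cl'[of i] unfolding Ci_def by simp
    then have "Ci \<union> Cj \<in> V // ?R'" using quotientI[OF assms(2)] by simp
    ultimately show "insert (Ci \<union> Cj) (V // ?R - {Ci, Cj}) \<subseteq> V // ?R'" by blast
  qed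
qed

lemma card_quotient_rtrancl_merge:
  assumes "sym B" "finite V" "i \<in> V" "j \<in> V" "(i,j) \<notin> B\<^sup>*"
  shows "card (V // (insert (i,j) (insert (j,i) B))\<^sup>*) + 1 = card (V // B\<^sup>*)"
proof -
  let ?R = "B\<^sup>*"
  define Ci where "Ci = ?R `` {i}"
  define Cj where "Cj = ?R `` {j}"
  have "Ci \<union> Cj \<notin> V // ?R"
  proof
    assume "Ci \<union> Cj \<in> V // ?R"
    then obtain x where "Ci \<union> Cj = ?R `` {x}" by (rule quotientE)
    moreover have "i \<in> Ci" "j \<in> Cj" unfolding Ci_def Cj_def by simp_all
    ultimately have "Ci = Cj"
      using rtrancl_class_eq_sym[OF assms(1)] unfolding Ci_def Cj_def by (metis UnI1 UnI2)
    then show False using assms(5) \<open>j \<in> Cj\<close> unfolding Ci_def by (metis Image_singleton_iff)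
  qed
  moreover have "{Ci, Cj} \<subseteq> V // ?R" unfolding Ci_def Cj_def using assms(3,4) by (auto intro: quotientI)
  moreover have "Ci \<noteq> Cj" using assms(5) unfolding Ci_def Cj_def by blast
  moreover have "finite (V // ?R)" unfolding quotient_def using assms(2) by simp
  ultimately show ?thesis using quotient_rtrancl_merge[OF assms(1,3), of j] card_mono[of "V // ?R" "{Ci, Cj}"]
    unfolding Ci_def Cj_def by (simp add: card_Diff_subset)
qed

lemma general_position_wrt_if_affine_independent:
  fixes Q :: "nat \<Rightarrow> 'a::euclidean_space"
  assumes inj: "inj_on Q {1..n}" and ai: "\<not> affine_dependent (Q ` {1..n})"
    and g: "gain_graph n E ends"
  shows "general_position_wrt n Q E ends phi"
proof -
  let ?f = "edges_of Q E ends phi" and ?L = "int_lattice Q E ends phi"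
  let ?F = "{S. balanced_flat n E ends phi S \<and> flat_rank n ends S \<le> DIM('a)}"
  have order: "t \<subseteq> s \<longleftrightarrow> ?f s \<subseteq> ?f t" if s: "s \<in> ?L" and t: "t \<in> ?L" for s t
  proof
    show "?f s \<subseteq> ?f t" if "t \<subseteq> s" using that unfolding edges_of_def by auto
    assume "?f s \<subseteq> ?f t"
    then have "(\<Inter>e\<in>?f t. gain_hyp Q ends phi e) \<subseteq> (\<Inter>e\<in>?f s. gain_hyp Q ends phi e)" by blast
    then show "t \<subseteq> s"
      using int_lattice_eq_Inter_edges_of[OF s] int_lattice_eq_Inter_edges_of[OF t] by simp
  qed
  have "inj_on ?f ?L"
  proof (rule inj_onI)
    fix s t assume "s \<in> ?L" "t \<in> ?L" "?f s = ?f t"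
    then have "t \<subseteq> s" "s \<subseteq> t" using order by simp_all
    then show "s = t" by (rule subset_antisym[rotated])
  qed
  moreover have "?f ` ?L \<subseteq> ?F"
  proof
    fix S assume "S \<in> ?f ` ?L"
    then obtain s where "s \<in> ?L" "S = ?f s" by blast
    then show "S \<in> ?F"
      using edges_of_balanced_flat[OF g] rank_le_DIM_if_affine_independent[OF inj ai]
      unfolding flat_rank_def by simp
  qed
  moreover have "S \<in> ?f ` ?L" if "S \<in> ?F" for S
  proof -
    have "balanced_flat n E ends phi S" using that by simp
    note flat = balanced_flat_eq_edges_of_Inter[OF inj ai g this]
    show ?thesis using flat(1) by (rule rev_image_eqI) (simp add: flat(2))
  qed
  ultimately have "bij_betw ?f ?L ?F" unfolding bij_betw_def by blast
  then show ?thesis unfolding general_position_wrt_def using order by simp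
qed

definition pair_rel :: "'v set \<Rightarrow> 'v set set \<Rightarrow> ('v \<times> 'v) set" where
  "pair_rel V T = {(u,v). u \<in> V \<and> v \<in> V \<and> {u,v} \<in> T}"

definition pair_diffs :: "('v \<Rightarrow> 'a::real_vector) \<Rightarrow> 'v set set \<Rightarrow> 'a set" where
  "pair_diffs Q T = {Q i - Q j | i j. {i,j} \<in> T}"

lemma comp_rel_pairs: "comp_rel V (\<lambda>u v. {u,v} \<in> T) = (pair_rel V T)\<^sup>*"
  unfolding comp_rel_def pair_rel_def by (simp add: insert_commute)

lemma sym_pair_rel: "sym (pair_rel V T)"
  unfolding pair_rel_def sym_def by (auto simp: insert_commute)

lemma diff_in_span_pair_diffs:
  assumes "(u,w) \<in> (pair_rel V T)\<^sup>*"
  shows "Q u - Q w \<in> span (pair_diffs Q T)"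
  using assms
proof (induction rule: rtrancl_induct)
  case base
  then show ?case by (simp add: span_zero)
next
  case (step w z)
  then have "Q w - Q z \<in> span (pair_diffs Q T)"
    unfolding pair_rel_def pair_diffs_def by (blast intro: span_base)
  from span_add[OF step.IH this] show ?case by simp
qed

lemma diff_notin_span_pair_diffs:
  fixes Q :: "'v \<Rightarrow> 'a::euclidean_space"
  assumes inj: "inj_on Q V" and ai: "\<not> affine_dependent (Q ` V)"
    and T: "T \<subseteq> {{i,j} | i j. i \<in> V \<and> j \<in> V}" and i: "i \<in> V" and j: "j \<in> V"
    and nij: "(i,j) \<notin> (pair_rel V T)\<^sup>*"
  shows "Q i - Q j \<notin> span (pair_diffs Q T)"
proof
  let ?R = "(pair_rel V T)\<^sup>*"
  define y where "y = (\<lambda>k. if (i,k) \<in> ?R then 1 else (0::real))"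
  \<comment> \<open>P will be orthogonal to every pair difference, but not to Q i - Q j\<close>
  obtain P where P: "\<forall>k\<in>V. P \<bullet> (Q k - Q i) = y k - y i"
    using affine_independent_inner_interpolation[OF inj ai i, of y] by blast
  have "orthogonal P d" if d: "d \<in> pair_diffs Q T" for d
  proof -
    obtain a b where ab: "d = Q a - Q b" "{a,b} \<in> T" using d unfolding pair_diffs_def by blast
    then have abV: "a \<in> V" "b \<in> V" using T by (auto simp: doubleton_eq_iff)
    then have "(a,b) \<in> ?R" using ab(2) unfolding pair_rel_def by auto
    then have "y a = y b" unfolding y_def using rtrancl_trans sym_rtrancl[OF sym_pair_rel]
      by (metis symD)
    have "P \<bullet> d = P \<bullet> (Q a - Q i) - P \<bullet> (Q b - Q i)" unfolding ab(1) by (simp add: inner_diff_right)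
    also have "\<dots> = y a - y b" using P abV by simp
    finally show ?thesis using \<open>y a = y b\<close> unfolding orthogonal_def by simp
  qed
  moreover assume "Q i - Q j \<in> span (pair_diffs Q T)"
  ultimately have "P \<bullet> (Q i - Q j) = 0" using orthogonal_to_span orthogonal_def by blast
  moreover have "P \<bullet> (Q i - Q j) = - (P \<bullet> (Q j - Q i))" by (simp add: inner_diff_right)
  moreover have "P \<bullet> (Q j - Q i) = y j - y i" using P j by blast
  ultimately show False using nij unfolding y_def by simp
qed

lemma dim_pair_diffs_add_num_comp:
  fixes Q :: "'v \<Rightarrow> 'a::euclidean_space"
  assumes inj: "inj_on Q V" and ai: "\<not> affine_dependent (Q ` V)" and V: "finite V"
    and T: "T \<subseteq> {{i,j} | i j. i \<in> V \<and> j \<in> V}"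
  shows "dim (pair_diffs Q T) + num_comp V (\<lambda>u v. {u,v} \<in> T) = card V"
proof -
  have "T \<subseteq> Pow V" using T by blast
  then have "finite T" using V by (meson finite_Pow_iff finite_subset)
  then show ?thesis using T unfolding num_comp_def comp_rel_pairs
  proof (induction T rule: finite_induct)
    case empty
    have "V // Id = (\<lambda>x. {x}) ` V" unfolding quotient_def by auto
    then show ?case by (simp add: pair_diffs_def pair_rel_def card_image)
  next
    case (insert p T)
    then obtain i j where ij: "i \<in> V" "j \<in> V" "p = {i,j}" by blast
    let ?R = "(pair_rel V T)\<^sup>*"
    have IH: "dim (pair_diffs Q T) + card (V // ?R) = card V" using insert by simp
    have D: "pair_diffs Q (insert p T) = insert (Q i - Q j) (insert (Q j - Q i) (pair_diffs Q T))"
      unfolding pair_diffs_def ij(3) by (auto simp: doubleton_eq_iff)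
    have B: "pair_rel V (insert p T) = insert (i,j) (insert (j,i) (pair_rel V T))"
      unfolding pair_rel_def ij(3) using ij(1,2) by (auto simp: doubleton_eq_iff)
    have "Q i - Q j \<in> span (insert (Q j - Q i) (pair_diffs Q T))"
      using span_neg[OF span_base[of "Q j - Q i"]] by simp
    then have dD: "dim (pair_diffs Q (insert p T)) = dim (insert (Q j - Q i) (pair_diffs Q T))"
      unfolding D by (simp add: dim_insert)
    show ?case
    proof (cases "(j,i) \<in> ?R")
      case True
      then have "(i,j) \<in> ?R" using sym_rtrancl[OF sym_pair_rel] by (metis symD)
      then have "(pair_rel V (insert p T))\<^sup>* = ?R"
        unfolding B using True by (intro rtrancl_subset) auto
      moreover have "dim (pair_diffs Q (insert p T)) = dim (pair_diffs Q T)"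
        using diff_in_span_pair_diffs[OF True] dD by (simp add: dim_insert)
      ultimately show ?thesis using IH by simp
    next
      case False
      then have "card (V // (pair_rel V (insert p T))\<^sup>*) + 1 = card (V // ?R)"
        unfolding B using card_quotient_rtrancl_merge[OF sym_pair_rel V ij(2,1)]
        by (simp add: insert_commute)
      moreover have "dim (pair_diffs Q (insert p T)) = dim (pair_diffs Q T) + 1"
        using diff_notin_span_pair_diffs[OF inj ai _ ij(2,1) False] insert.prems dD
        by (simp add: dim_insert)
      ultimately show ?thesis using IH by simp
    qed
  qed
qed

lemma ideal_general_position_if_affine_independent:
  fixes Q :: "nat \<Rightarrow> 'a::euclidean_space"
  assumes inj: "inj_on Q {1..n}" and ai: "\<not> affine_dependent (Q ` {1..n})"
  shows "ideal_general_position n Q"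
  unfolding ideal_general_position_def
proof (intro conjI allI impI)
  fix T assume "T \<subseteq> unordered_pairs n"
  then have "T \<subseteq> {{i,j} | i j. i \<in> {1..n} \<and> j \<in> {1..n}}" unfolding unordered_pairs_def by blast
  then have "dim (pair_diffs Q T) + num_comp {1..n} (\<lambda>u v. {u,v} \<in> T) = n"
    using dim_pair_diffs_add_num_comp[OF inj ai] by simp
  then show "dim {Q i - Q j |i j. {i, j} \<in> T} = min (n - num_comp {1..n} (\<lambda>u v. {u, v} \<in> T)) DIM('a)"
    using rank_le_DIM_if_affine_independent[OF inj ai] unfolding pair_diffs_def by fastforce
qed (rule inj)

theorem proposition6p9:
  fixes n :: nat and Q :: "nat \<Rightarrow> 'a::euclidean_space"
  assumes "inj_on Q {1..n}" and "\<not> affine_dependent (Q ` {1..n})"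
  shows "ideal_general_position n Q \<and>
         (\<forall>(E::'e set) ends phi. gain_graph n E ends \<longrightarrow> general_position_wrt n Q E ends phi)"
  using ideal_general_position_if_affine_independent[OF assms]
    general_position_wrt_if_affine_independent[OF assms] by blast

end
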